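(* Let $X$ and $Y$ be topological spaces, $Z$ a metric space, and $f:X\times Y\to Z$ a mapping. Suppose $Y$ has a countable base and that for every $y\in Y$ the mapping $f^y$ is quasicontinuous. Then there is a residual set $R\subset X$ such that for every $(a,b)\in R\times Y$, $f$ is continuous at $(a,b)$ provided $f_a$ is continuous at $b$.
   Context: $f_x(y)=f^y(x)=f(x,y)$. A mapping $g:X\to Z$ is quasicontinuous at $a$ if for each neighborhood $U$ of $a$ and each neighborhood $W$ of $g(a)$ there is an open $O$ with $\emptyset\ne O\subset U$ and $g(O)\subset W$; quasicontinuous means quasicontinuous at every point. Residual means containing a countable intersection of dense open sets. *)

theory Defs
  imports "HOL-Analysis.Analysis"
begin

text \<open>Quasicontinuity at a point (neighbourhoods may be taken open w.l.o.g.).\<close>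
definition quasicontinuous_at :: "('a::topological_space \<Rightarrow> 'b::topological_space) \<Rightarrow> 'a \<Rightarrow> bool" where
  "quasicontinuous_at g a \<longleftrightarrow>
     (\<forall>U W. open U \<longrightarrow> a \<in> U \<longrightarrow> open W \<longrightarrow> g a \<in> W \<longrightarrow>
        (\<exists>V. open V \<and> V \<noteq> {} \<and> V \<subseteq> U \<and> g ` V \<subseteq> W))"

definition quasicontinuous :: "('a::topological_space \<Rightarrow> 'b::topological_space) \<Rightarrow> bool" where
  "quasicontinuous g \<longleftrightarrow> (\<forall>a. quasicontinuous_at g a)"

definition residual :: "'a::topological_space set \<Rightarrow> bool" where
  "residual R \<longleftrightarrow> (\<exists>G :: nat \<Rightarrow> 'a set. (\<forall>n. open (G n) \<and> closure (G n) = UNIV) \<and> (\<Inter>n. G n) \<subseteq> R)"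

end

theory Submission
  imports Defs
begin

(*
  Fix a countable base BB of Y and a point y_B in each B in BB.  For e > 0
  two kinds of sets in X are considered:
  - the points where the oscillation of the section f(-, y_B) is below e; this set is
    open, and it is dense because f(-, y_B) is quasicontinuous;
  - the set P(B, e) of points x such that f(x,y) is more than e away from f(x,y_B) for
    some y in B; as for any set P, interior P united with the exterior of interior P
    is open and dense.
  Taking e = 1/(n+1), the points lying in all these countably many dense open sets
  (the "good points") form a residual set (lemma residual_good_points).  If a is good
  and f(a, -) is continuous at b, choose B containing b so small that f(a, -) varies by
  less than e/2 on B.  Then a lies outside P(B, e), hence a has a neighbourhood U
  missing interior P(B, e), and quasicontinuity of the sections f(-, y) shows that f
  stays within 4e of f(a,b) on U x B (lemma local_bound); this gives joint continuity
  at (a,b) (lemma tendsto_at_good_point), and the theorem follows.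
*)

lemma residualI:
  fixes R :: "'a::topological_space set"
  assumes "countable \<G>" and "\<forall>G\<in>\<G>. open G \<and> closure G = UNIV" and "\<Inter>\<G> \<subseteq> R"
  shows "residual R"
proof (cases "\<G> = {}")
  case True
  then show ?thesis
    using assms unfolding residual_def by (intro exI[of _ "\<lambda>n. UNIV"]) auto
next
  case False
  then have "range (from_nat_into \<G>) = \<G>"
    using assms(1) by simp
  then show ?thesis
    using assms(2,3) unfolding residual_def by (intro exI[of _ "from_nat_into \<G>"]) auto
qed

lemma open_union_exterior_dense:
  fixes S :: "'a::topological_space set"
  assumes "open S"
  shows "open (S \<union> - closure S)" and "closure (S \<union> - closure S) = UNIV"
proof -
  show "open (S \<union> - closure S)"
    using assms by auto
  have "closure S \<subseteq> closure (S \<union> - closure S)"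
    by (rule closure_mono) blast
  moreover have "- closure S \<subseteq> closure (S \<union> - closure S)"
    using closure_subset[of "S \<union> - closure S"] by blast
  ultimately show "closure (S \<union> - closure S) = UNIV"
    by blast
qed

definition small_oscillation :: "('a::topological_space \<Rightarrow> 'c::metric_space) \<Rightarrow> real \<Rightarrow> 'a set" where
  "small_oscillation g \<epsilon> =
     {x. \<exists>U. open U \<and> x \<in> U \<and> (\<forall>u\<in>U. \<forall>v\<in>U. dist (g u) (g v) < \<epsilon>)}"

text \<open>Small oscillation at x is witnessed on a whole neighbourhood of x.\<close>
lemma open_small_oscillation: "open (small_oscillation g \<epsilon>)"
  unfolding small_oscillation_def open_subopen[of "{x. _ x}"] by blast

lemma quasicontinuous_atE:
  fixes g :: "'a::topological_space \<Rightarrow> 'c::metric_space"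
  assumes "quasicontinuous_at g x" "open U" "x \<in> U" "\<epsilon> > 0"
  obtains V where "open V" "V \<noteq> {}" "V \<subseteq> U" "\<forall>v\<in>V. dist (g x) (g v) < \<epsilon>"
  using assms unfolding quasicontinuous_at_def
  by (metis centre_in_ball image_subset_iff mem_ball open_ball)

lemma dense_small_oscillation:
  fixes g :: "'a::topological_space \<Rightarrow> 'c::metric_space"
  assumes "quasicontinuous g" and "\<epsilon> > 0"
  shows "closure (small_oscillation g \<epsilon>) = UNIV"
proof (rule ccontr)
  let ?E = "small_oscillation g \<epsilon>"
  assume "closure ?E \<noteq> UNIV"
  then obtain x where "x \<in> - closure ?E"
    by blast
  moreover have "\<epsilon> / 2 > 0"
    using assms(2) by simp
  ultimately obtain V where V: "open V" "V \<noteq> {}" "V \<subseteq> - closure ?E"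
    and close: "\<forall>v\<in>V. dist (g x) (g v) < \<epsilon> / 2"
    using assms(1) quasicontinuous_def quasicontinuous_atE
    by (metis open_Compl closed_closure)
  have "\<forall>u\<in>V. \<forall>v\<in>V. dist (g u) (g v) < \<epsilon>"
    using close by (metis dist_triangle_half_r)
  then have "V \<subseteq> ?E"
    using V(1) unfolding small_oscillation_def by blast
  then show False
    using V(2,3) closure_subset by blast
qed

definition jump_set :: "('a \<times> 'b \<Rightarrow> 'c::metric_space) \<Rightarrow> 'b set \<Rightarrow> 'b \<Rightarrow> real \<Rightarrow> 'a set" where
  "jump_set f B y0 \<epsilon> = {x. \<exists>y\<in>B. \<epsilon> < dist (f (x, y)) (f (x, y0))}"

lemma local_bound:
  fixes f :: "'a::topological_space \<times> 'b \<Rightarrow> 'c::metric_space"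
    and B :: "'b set" and y0 :: 'b and \<epsilon> :: real
  defines "P \<equiv> jump_set f B y0 \<epsilon>"
  assumes qc: "\<forall>y. quasicontinuous (\<lambda>x. f (x, y))"
    and osc: "a \<in> small_oscillation (\<lambda>x. f (x, y0)) \<epsilon>"
    and regular: "a \<in> interior P \<union> - closure (interior P)"
    and y0: "y0 \<in> B"
    and near: "\<forall>y\<in>B. dist (f (a, y)) (f (a, b)) < \<epsilon> / 2"
  obtains U where "open U" "a \<in> U" "\<forall>x\<in>U. \<forall>y\<in>B. dist (f (x, y)) (f (a, b)) < 4 * \<epsilon>"
proof -
  have eps: "\<epsilon> > 0"
  proof -
    have "0 \<le> dist (f (a, y0)) (f (a, b))" "dist (f (a, y0)) (f (a, b)) < \<epsilon> / 2"
      using near y0 by auto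
    then show ?thesis by linarith
  qed
  have "a \<notin> P"
  proof
    assume "a \<in> P"
    then obtain y where "y \<in> B" and far: "\<epsilon> < dist (f (a, y)) (f (a, y0))"
      unfolding P_def jump_set_def by blast
    then have "dist (f (a, y)) (f (a, b)) < \<epsilon> / 2" "dist (f (a, y0)) (f (a, b)) < \<epsilon> / 2"
      using near y0 by auto
    then have "dist (f (a, y)) (f (a, y0)) < \<epsilon>"
      by (rule dist_triangle_half_l)
    then show False
      using far by simp
  qed
  then have a_ext: "a \<in> - closure (interior P)"
    using regular interior_subset by blast
  obtain U1 where U1: "open U1" "a \<in> U1"
    and flat: "\<forall>u\<in>U1. \<forall>v\<in>U1. dist (f (u, y0)) (f (v, y0)) < \<epsilon>"
    using osc unfolding small_oscillation_def by blast
  define U where "U = U1 \<inter> - closure (interior P)"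
  have U: "open U" "a \<in> U"
    using U1 a_ext unfolding U_def by auto
  have "dist (f (x, y)) (f (a, b)) < 4 * \<epsilon>" if x: "x \<in> U" and y: "y \<in> B" for x y
  proof (rule ccontr)
    assume far: "\<not> ?thesis"
    have "quasicontinuous_at (\<lambda>x. f (x, y)) x"
      using qc unfolding quasicontinuous_def by blast
    then obtain V where V: "open V" "V \<noteq> {}" "V \<subseteq> U"
      and close: "\<forall>v\<in>V. dist (f (x, y)) (f (v, y)) < \<epsilon>"
      using quasicontinuous_atE U(1) x eps by metis
    have "V \<subseteq> P"
    proof
      fix v
      assume v: "v \<in> V"
      have "dist (f (x, y)) (f (v, y)) < \<epsilon>"
        using close v by blast
      moreover have "dist (f (v, y0)) (f (a, y0)) < \<epsilon>"
        using flat U1(2) v V(3) unfolding U_def by blast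
      moreover have "dist (f (a, y0)) (f (a, b)) < \<epsilon> / 2"
        using near y0 by blast
      moreover have "4 * \<epsilon> \<le> dist (f (x, y)) (f (a, b))"
        using far by simp
      ultimately have "\<epsilon> < dist (f (v, y)) (f (v, y0))"
        using dist_triangle[of "f (x, y)" "f (a, b)" "f (v, y)"]
          dist_triangle[of "f (v, y)" "f (a, b)" "f (v, y0)"]
          dist_triangle[of "f (v, y0)" "f (a, b)" "f (a, y0)"] eps
        by linarith
      then show "v \<in> P"
        using y unfolding P_def jump_set_def by blast
    qed
    then have "V \<subseteq> interior P"
      using V(1) by (rule interior_maximal)
    then show False
      using V(2,3) closure_subset unfolding U_def by blast
  qed
  then show thesis
    using U that by blast
qed

lemma tendsto_at_pair_from_boxes:
  fixes f :: "'a::topological_space \<times> 'b::topological_space \<Rightarrow> 'c::metric_space"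
  assumes "\<And>e. e > 0 \<Longrightarrow> \<exists>U V. open U \<and> open V \<and> a \<in> U \<and> b \<in> V \<and>
                          (\<forall>x\<in>U. \<forall>y\<in>V. dist (f (x, y)) (f (a, b)) < e)"
  shows "(f \<longlongrightarrow> f (a, b)) (at (a, b))"
proof (rule tendstoI)
  fix e :: real
  assume "e > 0"
  then obtain U V where UV: "open U" "open V" "a \<in> U" "b \<in> V"
    and bound: "\<forall>x\<in>U. \<forall>y\<in>V. dist (f (x, y)) (f (a, b)) < e"
    using assms[OF \<open>e > 0\<close>] by blast
  have "open (U \<times> V)" "(a, b) \<in> U \<times> V"
    using UV by (simp_all add: open_Times)
  moreover have "\<forall>z\<in>U \<times> V. dist (f z) (f (a, b)) < e"
    using bound by force
  ultimately show "\<forall>\<^sub>F z in at (a, b). dist (f z) (f (a, b)) < e"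
    unfolding eventually_at_topological by (metis (no_types, lifting))
qed

lemma basis_element_near:
  fixes g :: "'b::topological_space \<Rightarrow> 'c::metric_space"
  assumes "topological_basis \<B>" and "(g \<longlongrightarrow> g b) (at b)" and "\<epsilon> > 0"
  obtains B where "B \<in> \<B>" "b \<in> B" "\<forall>y\<in>B. dist (g y) (g b) < \<epsilon>"
proof -
  obtain T where T: "open T" "b \<in> T" and near: "\<forall>y\<in>T. y \<noteq> b \<longrightarrow> dist (g y) (g b) < \<epsilon>"
    using tendstoD[OF assms(2,3)] unfolding eventually_at_topological by blast
  obtain B where B: "B \<in> \<B>" "b \<in> B" "B \<subseteq> T"
    using topological_basisE[OF assms(1) T] by blast
  have "dist (g y) (g b) < \<epsilon>" if "y \<in> B" for y
    using near B(3) that assms(3) by (cases "y = b") auto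
  then show thesis
    using B(1,2) that by blast
qed

text \<open>A point a is good for a family \<B> of open sets with reference points pt B \<in> B
  if, for all B \<in> \<B> and \<epsilon> = 1/(n+1), it satisfies the hypotheses on a of local_bound.\<close>
definition good_point ::
    "('a::topological_space \<times> 'b \<Rightarrow> 'c::metric_space) \<Rightarrow> ('b set \<Rightarrow> 'b) \<Rightarrow> 'b set set \<Rightarrow> 'a \<Rightarrow> bool" where
  "good_point f pt \<B> a \<longleftrightarrow>
     (\<forall>B\<in>\<B>. \<forall>n. let \<epsilon> = inverse (real (Suc n)); J = interior (jump_set f B (pt B) \<epsilon>) in
        a \<in> small_oscillation (\<lambda>x. f (x, pt B)) \<epsilon> \<and> a \<in> J \<union> - closure J)"

text \<open>For a countable family \<B>, good points form a residual set: they are the points of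
  countably many dense open sets.\<close>
lemma residual_good_points:
  fixes f :: "'a::topological_space \<times> 'b \<Rightarrow> 'c::metric_space"
  assumes qc: "\<forall>y. quasicontinuous (\<lambda>x. f (x, y))" and "countable \<B>"
  shows "residual {a. good_point f pt \<B> a}"
proof -
  define eps where "eps n = inverse (real (Suc n))" for n :: nat
  define Osc where "Osc B n = small_oscillation (\<lambda>x. f (x, pt B)) (eps n)" for B n
  define J where "J B n = interior (jump_set f B (pt B) (eps n))" for B n
  define Reg where "Reg B n = J B n \<union> - closure (J B n)" for B n
  define \<G> where "\<G> = case_prod Osc ` (\<B> \<times> UNIV) \<union> case_prod Reg ` (\<B> \<times> UNIV)"
  show ?thesis
  proof (rule residualI)
    show "countable \<G>"
      unfolding \<G>_def using \<open>countable \<B>\<close> by auto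
    have "eps n > 0" for n
      unfolding eps_def by simp
    then have "open (Osc B n) \<and> closure (Osc B n) = UNIV" for B n
      using open_small_oscillation dense_small_oscillation qc
      unfolding Osc_def by blast
    moreover have "open (Reg B n) \<and> closure (Reg B n) = UNIV" for B n
      unfolding Reg_def J_def by (intro conjI open_union_exterior_dense open_interior)
    ultimately show "\<forall>G\<in>\<G>. open G \<and> closure G = UNIV"
      unfolding \<G>_def by auto
    show "\<Inter>\<G> \<subseteq> {a. good_point f pt \<B> a}"
      unfolding \<G>_def good_point_def Osc_def Reg_def J_def eps_def Let_def by blast
  qed
qed

lemma tendsto_at_good_point:
  fixes f :: "'a::topological_space \<times> 'b::topological_space \<Rightarrow> 'c::metric_space"
  assumes qc: "\<forall>y. quasicontinuous (\<lambda>x. f (x, y))"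
    and basis: "topological_basis \<B>" and pt: "\<And>B. b \<in> B \<Longrightarrow> pt B \<in> B"
    and good: "good_point f pt \<B> a"
    and cont: "((\<lambda>y. f (a, y)) \<longlongrightarrow> f (a, b)) (at b)"
  shows "(f \<longlongrightarrow> f (a, b)) (at (a, b))"
proof (rule tendsto_at_pair_from_boxes)
  fix e :: real
  assume "e > 0"
  then obtain n where "inverse (real (Suc n)) < e / 4"
    using reals_Archimedean[of "e / 4"] by auto
  moreover define \<epsilon> where "\<epsilon> = inverse (real (Suc n))"
  ultimately have small: "4 * \<epsilon> < e" and "\<epsilon> > 0"
    by simp_all
  obtain B where B: "B \<in> \<B>" "b \<in> B" and near: "\<forall>y\<in>B. dist (f (a, y)) (f (a, b)) < \<epsilon> / 2"
    using basis_element_near[OF basis cont, of "\<epsilon> / 2"] \<open>\<epsilon> > 0\<close> by auto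
  obtain U where "open U" "a \<in> U" and bound: "\<forall>x\<in>U. \<forall>y\<in>B. dist (f (x, y)) (f (a, b)) < 4 * \<epsilon>"
    using local_bound[OF qc _ _ pt[OF B(2)] near] good B(1)
    unfolding good_point_def \<epsilon>_def Let_def by blast
  moreover have "open B"
    using topological_basis_open[OF basis B(1)] .
  ultimately show "\<exists>U V. open U \<and> open V \<and> a \<in> U \<and> b \<in> V \<and>
                 (\<forall>x\<in>U. \<forall>y\<in>V. dist (f (x, y)) (f (a, b)) < e)"
    using small B(2) by (intro exI[of _ U] exI[of _ B]) force
qed

theorem corollary3p5:
  fixes f :: "'a::topological_space \<times> 'b::second_countable_topology \<Rightarrow> 'c::metric_space"
  assumes "\<forall>y. quasicontinuous (\<lambda>x. f (x, y))"
  shows "\<exists>R. residual R \<and>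
           (\<forall>a\<in>R. \<forall>b. ((\<lambda>y. f (a, y)) \<longlongrightarrow> f (a, b)) (at b) \<longrightarrow> (f \<longlongrightarrow> f (a, b)) (at (a, b)))"
proof -
  obtain \<B> :: "'b set set" where "countable \<B>" and basis: "topological_basis \<B>"
    using ex_countable_basis by blast
  define pt where "pt B = (SOME y. y \<in> B)" for B :: "'b set"
  have pt: "pt B \<in> B" if "b \<in> B" for b B
    unfolding pt_def using that by (rule someI)
  have "residual {a. good_point f pt \<B> a}"
    using residual_good_points[OF assms \<open>countable \<B>\<close>] .
  moreover have "(f \<longlongrightarrow> f (a, b)) (at (a, b))"
    if "good_point f pt \<B> a" and "((\<lambda>y. f (a, y)) \<longlongrightarrow> f (a, b)) (at b)" for a b
    using tendsto_at_good_point[OF assms basis pt that] .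
  ultimately show ?thesis
    by blast
qed

end
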